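(* Let $g \in \mathbb{R}$. For all $p, q \in \Delta_d^{\mathcal{S}}$, \[ \ell^\Theta_{\mathrm C,\infty}\bigl(\mathcal G_g(p), \mathcal G_g(q)\bigr) \le \ell^\Theta_{\mathrm C,\infty}(p,q). \] In particular, $\mathcal G := \mathcal G_{\bar r^\pi}$ is non-expansive in $\ell^\Theta_{\mathrm C,\infty}$.
   Context: Finite MDP with state set $\mathcal{S}=\{1,\dots,m\}$, finite action set $\mathcal A$, deterministic reward function $R:\mathcal S\times\mathcal A\to[0,1]$, and a fixed policy $\pi$ inducing a transition matrix $P=(P_{ij})$ on $\mathcal S$ that is irreducible and aperiodic with stationary distribution $\mu$. For $i,j\in\mathcal S$, $R_{ij}$ denotes the (finite-valued, $[0,1]$-valued) random one-step reward conditioned on the transition $i\to j$. The gain is $\bar r^\pi=\sum_i\mu_i\sum_j P_{ij}\mathbb E[R_{ij}]$. For $g\in\mathbb R$, $\nu^{(g)}_{ij}:=\mathrm{Law}(R_{ij}-g)$. $\mathcal P_2(\mathbb R)$ is the set of probability laws on $\mathbb R$ with finite second moment; $\mathcal F^{\mathcal S}$ is the set of families $\eta=(\eta_i)_{i\in\mathcal S}$ with $\eta_i\in\mathcal P_2(\mathbb R)$. The operator $\mathcal T_g:\mathcal F^{\mathcal S}\to\mathcal F^{\mathcal S}$ is $(\mathcal T_g\eta)_i:=\sum_j P_{ij}(\nu^{(g)}_{ij}\ast\eta_j)$ ($\ast$ = convolution). Categorical support: $\Theta=\{\theta_1<\dots<\theta_d\}\subset\mathbb R$ with constant stride $\Delta=\theta_{k+1}-\theta_k>0$.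 $\Delta_d$ is the probability simplex in $\mathbb R^d$ and $\Delta_d^{\mathcal S}$ the set of families $p=(p_i)_{i\in\mathcal S}$, $p_i\in\Delta_d$. For $u\in\Delta_d$, $c\in\mathbb R$, $\eta^{u,c}:=\sum_{k=1}^d u_k\delta_{\theta_k+c}$, and for $p\in\Delta_d^{\mathcal S}$, $\eta^{p,c}:=(\eta^{p_i,c})_{i\in\mathcal S}$. The categorical projection $\Pi^{\Theta}_{\mathrm C}$ maps a point mass $\delta_x$ to $\delta_{\theta_1}$ if $x\le\theta_1$, to $\delta_{\theta_d}$ if $x\ge\theta_d$, and to $\frac{\theta_{k+1}-x}{\Delta}\delta_{\theta_k}+\frac{x-\theta_k}{\Delta}\delta_{\theta_{k+1}}$ if $\theta_k\le x\le\theta_{k+1}$; it is extended to laws $\eta$ by $\Pi^\Theta_{\mathrm C}\eta=\int\Pi^\Theta_{\mathrm C}\delta_x\,\eta(\mathrm dx)$, and applied statewise to families. For $g\in\mathbb R$ and $p\in\Delta_d^{\mathcal S}$, $\mathcal G_g(p)\in\Delta_d^{\mathcal S}$ is the unique family $q$ with $\Pi^\Theta_{\mathrm C}\bigl((\mathcal T_g\eta^{p,0})_i\bigr)=\eta^{q_i,0}$ for all $i$. Coordinate Cramér metric: for $u\in\Delta_d$, $F_u(\theta_k):=\sum_{j=1}^k u_j$; $\ell^\Theta_{\mathrm C}(u,v)^2:=\Delta\sum_{k=1}^{d-1}(F_u(\theta_k)-F_v(\theta_k))^2$; for $p,q\in\Delta_d^{\mathcal S}$, $\ell^\Theta_{\mathrm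 C,\infty}(p,q):=\max_{i}\ell^\Theta_{\mathrm C}(p_i,q_i)$. *)

theory Defs
  imports "HOL-Probability.Probability"
begin

text \<open>States are 1..m; the transition kernel of the policy is given row-wise as
  P i :: nat pmf (so P_ij = pmf (P i) j). Rewards R_ij are given by their laws R i j.\<close>

definition stoch_kernel :: "nat \<Rightarrow> (nat \<Rightarrow> nat pmf) \<Rightarrow> bool" where
  "stoch_kernel m P \<longleftrightarrow> (\<forall>i\<in>{1..m}. set_pmf (P i) \<subseteq> {1..m})"

primrec step_pmf :: "(nat \<Rightarrow> nat pmf) \<Rightarrow> nat \<Rightarrow> nat \<Rightarrow> nat pmf" where
  "step_pmf P 0 i = return_pmf i"
| "step_pmf P (Suc n) i = bind_pmf (P i) (\<lambda>j. step_pmf P n j)"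

definition irreducible_kernel :: "nat \<Rightarrow> (nat \<Rightarrow> nat pmf) \<Rightarrow> bool" where
  "irreducible_kernel m P \<longleftrightarrow>
     (\<forall>i\<in>{1..m}. \<forall>j\<in>{1..m}. \<exists>n>0. pmf (step_pmf P n i) j > 0)"

definition aperiodic_kernel :: "nat \<Rightarrow> (nat \<Rightarrow> nat pmf) \<Rightarrow> bool" where
  "aperiodic_kernel m P \<longleftrightarrow>
     (\<forall>i\<in>{1..m}. Gcd {n. n > 0 \<and> pmf (step_pmf P n i) i > 0} = (1::nat))"

definition stationary :: "nat \<Rightarrow> (nat \<Rightarrow> nat pmf) \<Rightarrow> (nat \<Rightarrow> real) \<Rightarrow> bool" where
  "stationary m P \<mu> \<longleftrightarrow> (\<forall>i\<in>{1..m}. \<mu> i \<ge> 0) \<and> (\<Sum>i\<in>{1..m}. \<mu> i) = 1 \<and>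
     (\<forall>j\<in>{1..m}. \<mu> j = (\<Sum>i\<in>{1..m}. \<mu> i * pmf (P i) j))"

definition gain :: "nat \<Rightarrow> (nat \<Rightarrow> nat pmf) \<Rightarrow> (nat \<Rightarrow> nat \<Rightarrow> real pmf) \<Rightarrow> real" where
  "gain m P R = (let \<mu> = (THE \<mu>. stationary m P \<mu> \<and> (\<forall>i. i \<notin> {1..m} \<longrightarrow> \<mu> i = 0)) in
     (\<Sum>i\<in>{1..m}. \<mu> i * (\<Sum>j\<in>{1..m}. pmf (P i) j * measure_pmf.expectation (R i j) (\<lambda>r. r))))"

definition nu :: "(nat \<Rightarrow> nat \<Rightarrow> real pmf) \<Rightarrow> real \<Rightarrow> nat \<Rightarrow> nat \<Rightarrow> real pmf" where
  "nu R g i j = map_pmf (\<lambda>r. r - g) (R i j)"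

definition conv_pmf :: "real pmf \<Rightarrow> real pmf \<Rightarrow> real pmf" where
  "conv_pmf \<nu> \<eta> = bind_pmf \<nu> (\<lambda>x. map_pmf (\<lambda>y. x + y) \<eta>)"

definition T_op :: "(nat \<Rightarrow> nat pmf) \<Rightarrow> (nat \<Rightarrow> nat \<Rightarrow> real pmf) \<Rightarrow> real
    \<Rightarrow> (nat \<Rightarrow> real pmf) \<Rightarrow> (nat \<Rightarrow> real pmf)" where
  "T_op P R g \<eta> i = bind_pmf (P i) (\<lambda>j. conv_pmf (nu R g i j) (\<eta> j))"

definition simplex_d :: "nat \<Rightarrow> (nat \<Rightarrow> real) set" where
  "simplex_d d = {u. (\<forall>k\<in>{1..d}. u k \<ge> 0) \<and> (\<Sum>k\<in>{1..d}. u k) = 1 \<and> (\<forall>k. k \<notin> {1..d} \<longrightarrow> u k = 0)}"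

definition simplex_fam :: "nat \<Rightarrow> nat \<Rightarrow> (nat \<Rightarrow> nat \<Rightarrow> real) set" where
  "simplex_fam m d = {p. \<forall>i\<in>{1..m}. p i \<in> simplex_d d}"

text \<open>Categorical law eta^{u,c} = sum_k u_k delta_{theta_k + c}.\<close>
definition cat_law :: "nat \<Rightarrow> (nat \<Rightarrow> real) \<Rightarrow> (nat \<Rightarrow> real) \<Rightarrow> real \<Rightarrow> real pmf" where
  "cat_law d \<theta> u c = embed_pmf (\<lambda>x. \<Sum>k\<in>{k\<in>{1..d}. \<theta> k + c = x}. u k)"

definition proj_point :: "nat \<Rightarrow> (nat \<Rightarrow> real) \<Rightarrow> real \<Rightarrow> real \<Rightarrow> real pmf" where
  "proj_point d \<theta> \<Delta> x =
     (if x \<le> \<theta> 1 then return_pmf (\<theta> 1)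
      else if x \<ge> \<theta> d then return_pmf (\<theta> d)
      else (let k = (GREATEST k. k \<in> {1..d} \<and> \<theta> k \<le> x) in
            map_pmf (\<lambda>b. if b then \<theta> (k+1) else \<theta> k)
                    (bernoulli_pmf ((x - \<theta> k) / \<Delta>))))"

definition proj_C :: "nat \<Rightarrow> (nat \<Rightarrow> real) \<Rightarrow> real \<Rightarrow> real pmf \<Rightarrow> real pmf" where
  "proj_C d \<theta> \<Delta> \<eta> = bind_pmf \<eta> (proj_point d \<theta> \<Delta>)"

definition G_op :: "nat \<Rightarrow> nat \<Rightarrow> (nat \<Rightarrow> real) \<Rightarrow> real \<Rightarrow> (nat \<Rightarrow> nat pmf)
    \<Rightarrow> (nat \<Rightarrow> nat \<Rightarrow> real pmf) \<Rightarrow> real \<Rightarrow> (nat \<Rightarrow> nat \<Rightarrow> real) \<Rightarrow> (nat \<Rightarrow> nat \<Rightarrow> real)" where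
  "G_op m d \<theta> \<Delta> P R g p = (THE q. q \<in> simplex_fam m d \<and> (\<forall>i. i \<notin> {1..m} \<longrightarrow> q i = (\<lambda>_. 0)) \<and>
      (\<forall>i\<in>{1..m}. proj_C d \<theta> \<Delta> (T_op P R g (\<lambda>j. cat_law d \<theta> (p j) 0) i) = cat_law d \<theta> (q i) 0))"

definition cdf_coord :: "(nat \<Rightarrow> real) \<Rightarrow> nat \<Rightarrow> real" where
  "cdf_coord u k = (\<Sum>j\<in>{1..k}. u j)"

definition cramer :: "nat \<Rightarrow> real \<Rightarrow> (nat \<Rightarrow> real) \<Rightarrow> (nat \<Rightarrow> real) \<Rightarrow> real" where
  "cramer d \<Delta> u v = sqrt (\<Delta> * (\<Sum>k\<in>{1..d-1}. (cdf_coord u k - cdf_coord v k)^2))"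

definition cramer_inf :: "nat \<Rightarrow> nat \<Rightarrow> real \<Rightarrow> (nat \<Rightarrow> nat \<Rightarrow> real) \<Rightarrow> (nat \<Rightarrow> nat \<Rightarrow> real) \<Rightarrow> real" where
  "cramer_inf m d \<Delta> p q = Max ((\<lambda>i. cramer d \<Delta> (p i) (q i)) ` {1..m})"

end

theory Submission
  imports Defs
begin

text \<open>The mass that the categorical projection of a point mass at \<open>x\<close> puts on
  \<open>{\<theta>\<^sub>1, ..., \<theta>\<^sub>k}\<close> is \<open>clamp01 (k - (x - \<theta>\<^sub>1) / \<Delta>)\<close>, a function of the offset of \<open>x\<close>
  measured in strides. Summing by parts over the atoms of \<open>\<eta>\<^bsup>p\<^sub>j,0\<^esup>\<close>, the CDF differences
  of \<open>G\<^sub>g(p)\<^sub>i\<close> and \<open>G\<^sub>g(q)\<^sub>i\<close> at the grid points therefore become averages, over the next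
  state \<open>j\<close> and the shifted reward \<open>s\<close>, of the CDF differences of \<open>p\<^sub>j\<close> and \<open>q\<^sub>j\<close>
  transported by a nonnegative kernel whose row and column sums are at most 1. Jensen's
  inequality, applied to the average and to each row of the kernel, then bounds the squared
  Cramer distance of the images by the largest squared distance of the arguments.
  Irreducibility, aperiodicity, the range of the rewards and the value of \<open>g\<close> play no role.\<close>

lemma square_weighted_sum_le:
  fixes w y :: "'a \<Rightarrow> real"
  assumes "finite S" and "\<And>a. a \<in> S \<Longrightarrow> 0 \<le> w a" and "(\<Sum>a\<in>S. w a) \<le> 1"
  shows "(\<Sum>a\<in>S. w a * y a)^2 \<le> (\<Sum>a\<in>S. w a * (y a)^2)"
proof -
  define c where "c = (\<Sum>a\<in>S. w a * y a)"
  have "0 \<le> (\<Sum>a\<in>S. w a * (y a - c)^2)"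
    using assms(2) by (intro sum_nonneg) auto
  also have "\<dots> = (\<Sum>a\<in>S. w a * (y a)^2) - 2 * c * (\<Sum>a\<in>S. w a * y a) + c^2 * (\<Sum>a\<in>S. w a)"
    by (simp add: power2_eq_square algebra_simps sum.distrib sum_subtractf sum_distrib_left
        sum_distrib_right)
  also have "\<dots> \<le> (\<Sum>a\<in>S. w a * (y a)^2) - c^2"
    using mult_left_mono[OF assms(3), of "c^2"] by (simp add: c_def power2_eq_square)
  finally show ?thesis
    by (simp add: c_def)
qed

lemma sum_squares_substochastic_mixture_le:
  fixes \<pi> :: "'a \<Rightarrow> real" and V :: "nat \<Rightarrow> nat \<Rightarrow> 'a \<Rightarrow> real" and D :: "'a \<Rightarrow> nat \<Rightarrow> real"
  assumes "finite S" and \<pi>_nonneg: "\<And>a. a \<in> S \<Longrightarrow> 0 \<le> \<pi> a" and \<pi>_sum: "(\<Sum>a\<in>S. \<pi> a) = 1"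
    and V_nonneg: "\<And>k l a. 0 \<le> V k l a"
    and V_rows: "\<And>k a. (\<Sum>l\<in>{1..n}. V k l a) \<le> 1"
    and V_cols: "\<And>l a. (\<Sum>k\<in>{1..n}. V k l a) \<le> 1"
    and D_bound: "\<And>a. a \<in> S \<Longrightarrow> (\<Sum>l\<in>{1..n}. (D a l)^2) \<le> C"
  shows "(\<Sum>k\<in>{1..n}. (\<Sum>a\<in>S. \<pi> a * (\<Sum>l\<in>{1..n}. V k l a * D a l))^2) \<le> C"
proof -
  have jensen: "(\<Sum>a\<in>S. \<pi> a * (\<Sum>l\<in>{1..n}. V k l a * D a l))^2
      \<le> (\<Sum>a\<in>S. \<pi> a * (\<Sum>l\<in>{1..n}. V k l a * (D a l)^2))" for k
  proof -
    have "(\<Sum>a\<in>S. \<pi> a * (\<Sum>l\<in>{1..n}. V k l a * D a l))^2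
        \<le> (\<Sum>a\<in>S. \<pi> a * (\<Sum>l\<in>{1..n}. V k l a * D a l)^2)"
      using assms(1) \<pi>_nonneg \<pi>_sum by (intro square_weighted_sum_le) auto
    also have "\<dots> \<le> (\<Sum>a\<in>S. \<pi> a * (\<Sum>l\<in>{1..n}. V k l a * (D a l)^2))"
      using \<pi>_nonneg V_nonneg V_rows
      by (intro sum_mono mult_left_mono square_weighted_sum_le) auto
    finally show ?thesis .
  qed
  have "(\<Sum>k\<in>{1..n}. (\<Sum>a\<in>S. \<pi> a * (\<Sum>l\<in>{1..n}. V k l a * D a l))^2)
      \<le> (\<Sum>k\<in>{1..n}. \<Sum>a\<in>S. \<pi> a * (\<Sum>l\<in>{1..n}. V k l a * (D a l)^2))"
    by (intro sum_mono jensen)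
  also have "\<dots> = (\<Sum>a\<in>S. \<Sum>k\<in>{1..n}. \<Sum>l\<in>{1..n}. \<pi> a * (V k l a * (D a l)^2))"
    by (subst sum.swap) (simp add: sum_distrib_left)
  also have "\<dots> = (\<Sum>a\<in>S. \<pi> a * (\<Sum>l\<in>{1..n}. (D a l)^2 * (\<Sum>k\<in>{1..n}. V k l a)))"
    by (intro sum.cong refl) (simp add: sum_distrib_left sum_distrib_right mult_ac, rule sum.swap)
  also have "\<dots> \<le> (\<Sum>a\<in>S. \<pi> a * C)"
  proof (intro sum_mono mult_left_mono)
    fix a assume "a \<in> S"
    have "(\<Sum>l\<in>{1..n}. (D a l)^2 * (\<Sum>k\<in>{1..n}. V k l a)) \<le> (\<Sum>l\<in>{1..n}. (D a l)^2)"
      using mult_left_mono[OF V_cols] by (intro sum_mono) fastforce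
    then show "(\<Sum>l\<in>{1..n}. (D a l)^2 * (\<Sum>k\<in>{1..n}. V k l a)) \<le> C"
      using D_bound[OF \<open>a \<in> S\<close>] by linarith
  qed (use \<pi>_nonneg in auto)
  also have "\<dots> = C"
    using \<pi>_sum by (simp add: sum_distrib_right[symmetric])
  finally show ?thesis .
qed

lemma sum_by_parts_cdf_coord:
  fixes u f :: "nat \<Rightarrow> real"
  shows "(\<Sum>l\<in>{1..n}. u l * f l)
    = cdf_coord u n * f n + (\<Sum>l\<in>{1..<n}. cdf_coord u l * (f l - f (Suc l)))"
proof (induction n)
  case 0
  then show ?case by (simp add: cdf_coord_def)
next
  case (Suc n)
  have "(\<Sum>l\<in>{1..<Suc n}. cdf_coord u l * (f l - f (Suc l)))
      = (\<Sum>l\<in>{1..<n}. cdf_coord u l * (f l - f (Suc l))) + cdf_coord u n * (f n - f (Suc n))"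
    by (cases "n = 0") (simp_all add: cdf_coord_def atLeastLessThanSuc)
  moreover have "cdf_coord u (Suc n) = cdf_coord u n + u (Suc n)"
    by (simp add: cdf_coord_def)
  ultimately show ?case
    using Suc.IH by (simp add: algebra_simps)
qed

lemma measure_bind_pmf_finite:
  assumes "finite B" and "set_pmf M \<subseteq> B"
  shows "measure (bind_pmf M N) A = (\<Sum>x\<in>B. pmf M x * measure (N x) A)"
proof -
  have "emeasure (bind_pmf M N) A = (\<integral>\<^sup>+x. emeasure (N x) A \<partial>M)"
    by simp
  also have "\<dots> = (\<Sum>x\<in>B. emeasure (N x) A * pmf M x)"
    using assms by (intro nn_integral_measure_pmf_support) (auto simp: set_pmf_eq)
  also have "\<dots> = (\<Sum>x\<in>B. ennreal (pmf M x * measure (N x) A))"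
    by (simp add: measure_pmf.emeasure_eq_measure ennreal_mult' mult.commute)
  also have "\<dots> = ennreal (\<Sum>x\<in>B. pmf M x * measure (N x) A)"
    by (rule sum_ennreal) simp
  finally show ?thesis
    by (simp add: measure_pmf.emeasure_eq_measure sum_nonneg)
qed

lemma pmf_cat_law:
  assumes "u \<in> simplex_d d"
  shows "pmf (cat_law d \<theta> u c) x = (\<Sum>k\<in>{k\<in>{1..d}. \<theta> k + c = x}. u k)"
proof -
  let ?f = "\<lambda>x. \<Sum>k\<in>{k\<in>{1..d}. \<theta> k + c = x}. u k"
  have nonneg: "0 \<le> ?f x" for x
    using assms by (auto simp: simplex_d_def intro!: sum_nonneg)
  have outside: "?f x = 0" if "x \<notin> (\<lambda>k. \<theta> k + c) ` {1..d}" for x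
  proof -
    have "{k\<in>{1..d}. \<theta> k + c = x} = {}"
      using that by auto
    then show ?thesis
      by (simp only:) simp
  qed
  have "(\<integral>\<^sup>+x. ennreal (?f x) \<partial>count_space UNIV) = (\<Sum>x\<in>(\<lambda>k. \<theta> k + c) ` {1..d}. ennreal (?f x))"
    by (rule nn_integral_count_space') (use outside in auto)
  also have "\<dots> = ennreal (\<Sum>x\<in>(\<lambda>k. \<theta> k + c) ` {1..d}. ?f x)"
    using nonneg by simp
  also have "(\<Sum>x\<in>(\<lambda>k. \<theta> k + c) ` {1..d}. ?f x) = (\<Sum>k\<in>{1..d}. u k)"
    by (rule sum.image_gen[symmetric]) simp
  also have "\<dots> = 1"
    using assms by (simp add: simplex_d_def)
  finally show ?thesis
    unfolding cat_law_def using nonneg by (subst pmf_embed_pmf) auto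
qed

lemma measure_map_bernoulli_pmf:
  assumes "0 \<le> t" and "t \<le> 1"
  shows "measure (map_pmf (\<lambda>b. if b then y1 else y0) (bernoulli_pmf t)) A
    = (if y0 \<in> A then 1 - t else 0) + (if y1 \<in> A then t else 0)"
proof -
  have "(\<lambda>b. if b then y1 else y0) -` A
      = (if y1 \<in> A then {True} else {}) \<union> (if y0 \<in> A then {False} else {})"
    by (auto split: if_split_asm)
  then show ?thesis
    using assms by (cases "y0 \<in> A"; cases "y1 \<in> A") (simp_all add: measure_measure_pmf_finite)
qed

lemma set_pmf_cat_law:
  assumes "u \<in> simplex_d d"
  shows "set_pmf (cat_law d \<theta> u 0) \<subseteq> \<theta> ` {1..d}"
proof
  fix x assume "x \<in> set_pmf (cat_law d \<theta> u 0)"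
  then have "(\<Sum>k\<in>{k\<in>{1..d}. \<theta> k + 0 = x}. u k) \<noteq> 0"
    using pmf_cat_law[OF assms] by (simp add: set_pmf_iff)
  then have "{k\<in>{1..d}. \<theta> k + 0 = x} \<noteq> {}"
    by (metis sum.empty)
  then show "x \<in> \<theta> ` {1..d}"
    by auto
qed

definition clamp01 :: "real \<Rightarrow> real" where
  "clamp01 z = max 0 (min 1 z)"

lemma clamp01_bounds: "0 \<le> clamp01 z" "clamp01 z \<le> 1"
  by (auto simp: clamp01_def)

lemma clamp01_mono: "y \<le> z \<Longrightarrow> clamp01 y \<le> clamp01 z"
  by (auto simp: clamp01_def)

text \<open>On a grid of stride \<open>\<Delta>\<close>, \<open>transport_kernel c k l\<close> is the difference of the CDFs at \<open>\<theta>\<^sub>k\<close>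
  of the projections of the atoms at \<open>\<theta>\<^sub>l + c\<Delta>\<close> and at \<open>\<theta>\<^sub>l\<^sub>+\<^sub>1 + c\<Delta>\<close>.\<close>

definition transport_kernel :: "real \<Rightarrow> nat \<Rightarrow> nat \<Rightarrow> real" where
  "transport_kernel c k l = clamp01 (real k - real l + 1 - c) - clamp01 (real k - real l - c)"

lemma transport_kernel_nonneg: "0 \<le> transport_kernel c k l"
  using clamp01_mono[of "real k - real l - c" "real k - real l + 1 - c"]
  by (simp add: transport_kernel_def)

lemma transport_kernel_row_sum_le: "(\<Sum>l\<in>{1..n}. transport_kernel c k l) \<le> 1"
proof -
  let ?f = "\<lambda>l. - clamp01 (real k - real l + 1 - c)"
  have "(\<Sum>l\<in>{1..n}. transport_kernel c k l) = (\<Sum>l = 1..n. ?f (Suc l) - ?f l)"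
    by (simp add: transport_kernel_def algebra_simps)
  also have "\<dots> = ?f (Suc n) - ?f 1"
    by (rule sum_Suc_diff) simp
  finally show ?thesis
    using clamp01_bounds[of "real k - real (Suc n) + 1 - c"] clamp01_bounds[of "real k - 1 + 1 - c"]
    by simp
qed

lemma transport_kernel_column_sum_le: "(\<Sum>k\<in>{1..n}. transport_kernel c k l) \<le> 1"
proof -
  let ?f = "\<lambda>k. clamp01 (real k - real l - c)"
  have "(\<Sum>k\<in>{1..n}. transport_kernel c k l) = (\<Sum>k = 1..n. ?f (Suc k) - ?f k)"
    by (simp add: transport_kernel_def algebra_simps)
  also have "\<dots> = ?f (Suc n) - ?f 1"
    by (rule sum_Suc_diff) simp
  finally show ?thesis
    using clamp01_bounds[of "real (Suc n) - real l - c"] clamp01_bounds[of "1 - real l - c"]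
    by simp
qed

lemma cramer_nonneg: "0 \<le> \<Delta> \<Longrightarrow> 0 \<le> cramer d \<Delta> u v"
  by (simp add: cramer_def sum_nonneg)

lemma cramer_le_cramer_inf: "j \<in> {1..m} \<Longrightarrow> cramer d \<Delta> (p j) (q j) \<le> cramer_inf m d \<Delta> p q"
  by (simp add: cramer_inf_def)

definition step_reward_pmf ::
    "(nat \<Rightarrow> nat pmf) \<Rightarrow> (nat \<Rightarrow> nat \<Rightarrow> real pmf) \<Rightarrow> real \<Rightarrow> nat \<Rightarrow> (nat \<times> real) pmf" where
  "step_reward_pmf P R g i = bind_pmf (P i) (\<lambda>j. map_pmf (Pair j) (nu R g i j))"

lemma set_pmf_step_reward_pmf:
  "set_pmf (step_reward_pmf P R g i) = (\<Union>j\<in>set_pmf (P i). Pair j ` (\<lambda>r. r - g) ` set_pmf (R i j))"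
  by (simp add: step_reward_pmf_def nu_def)

lemma proj_C_T_op_eq_bind_step_reward_pmf:
  "proj_C d \<theta> \<Delta> (T_op P R g \<eta> i)
    = bind_pmf (step_reward_pmf P R g i) (\<lambda>a. bind_pmf (\<eta> (fst a)) (\<lambda>y. proj_point d \<theta> \<Delta> (snd a + y)))"
  by (simp add: proj_C_def T_op_def conv_pmf_def step_reward_pmf_def bind_assoc_pmf bind_map_pmf
      map_pmf_def bind_return_pmf)

locale uniform_grid =
  fixes d :: nat and \<theta> :: "nat \<Rightarrow> real" and \<Delta> :: real
  assumes one_le_d: "1 \<le> d" and stride_pos: "0 < \<Delta>"
    and stride: "\<And>k. 1 \<le> k \<Longrightarrow> k < d \<Longrightarrow> \<theta> (Suc k) = \<theta> k + \<Delta>"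
begin

lemma grid_point: "1 \<le> k \<Longrightarrow> k \<le> d \<Longrightarrow> \<theta> k = \<theta> 1 + (real k - 1) * \<Delta>"
proof (induction k)
  case 0
  then show ?case by simp
next
  case (Suc k)
  then show ?case
    using stride[of k] by (cases "k = 0") (auto simp: algebra_simps)
qed

lemma grid_point_le_iff: "i \<in> {1..d} \<Longrightarrow> j \<in> {1..d} \<Longrightarrow> \<theta> i \<le> \<theta> j \<longleftrightarrow> i \<le> j"
  using grid_point[of i] grid_point[of j] stride_pos by auto

lemma inj_on_grid: "inj_on \<theta> {1..d}"
proof (rule inj_onI)
  fix i j assume "i \<in> {1..d}" "j \<in> {1..d}" "\<theta> i = \<theta> j"
  then show "i = j"
    using grid_point_le_iff[of i j] grid_point_le_iff[of j i] by auto
qed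

lemma grid_point_in_initial_segment_iff:
  "j \<in> {1..d} \<Longrightarrow> k \<le> d \<Longrightarrow> \<theta> j \<in> \<theta> ` {1..k} \<longleftrightarrow> j \<le> k"
  by (subst inj_on_image_mem_iff[OF inj_on_grid]) auto

lemma pmf_cat_law_grid_point:
  assumes "u \<in> simplex_d d" and "k \<in> {1..d}"
  shows "pmf (cat_law d \<theta> u 0) (\<theta> k) = u k"
proof -
  have "{k'\<in>{1..d}. \<theta> k' + 0 = \<theta> k} = {k}"
    using assms(2) inj_on_grid by (auto dest: inj_onD)
  then show ?thesis
    using pmf_cat_law[OF assms(1), of \<theta> 0 "\<theta> k"] by simp
qed

definition grid_weights :: "real pmf \<Rightarrow> nat \<Rightarrow> real" where
  "grid_weights L k = (if k \<in> {1..d} then pmf L (\<theta> k) else 0)"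

lemma grid_weights_in_simplex:
  assumes "set_pmf L \<subseteq> \<theta> ` {1..d}"
  shows "grid_weights L \<in> simplex_d d"
proof -
  have "(\<Sum>k\<in>{1..d}. grid_weights L k) = (\<Sum>x\<in>\<theta> ` {1..d}. pmf L x)"
    using sum.reindex[OF inj_on_grid, of "pmf L"] by (simp add: grid_weights_def)
  also have "\<dots> = 1"
    using assms by (intro sum_pmf_eq_1) auto
  finally show ?thesis
    by (auto simp: simplex_d_def grid_weights_def)
qed

lemma cat_law_grid_weights:
  assumes "set_pmf L \<subseteq> \<theta> ` {1..d}"
  shows "cat_law d \<theta> (grid_weights L) 0 = L"
proof (rule pmf_eqI)
  fix x
  show "pmf (cat_law d \<theta> (grid_weights L) 0) x = pmf L x"
  proof (cases "x \<in> \<theta> ` {1..d}")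
    case True
    then obtain k where "k \<in> {1..d}" "x = \<theta> k"
      by auto
    then show ?thesis
      using pmf_cat_law_grid_point[OF grid_weights_in_simplex[OF assms]]
      by (simp add: grid_weights_def)
  next
    case False
    then show ?thesis
      using assms set_pmf_cat_law[OF grid_weights_in_simplex[OF assms]]
      by (metis pmf_eq_0_set_pmf subsetD)
  qed
qed

lemma grid_weights_cat_law:
  assumes "u \<in> simplex_d d"
  shows "grid_weights (cat_law d \<theta> u 0) = u"
proof
  fix k
  show "grid_weights (cat_law d \<theta> u 0) k = u k"
    using assms pmf_cat_law_grid_point[OF assms, of k]
    by (auto simp: grid_weights_def simplex_d_def)
qed

lemma grid_cell_exists:
  assumes "\<theta> 1 \<le> x" and "x < \<theta> d"
  obtains j where "1 \<le> j" "j < d" "\<theta> j \<le> x" "x < \<theta> (Suc j)"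
proof -
  let ?K = "{k\<in>{1..d}. \<theta> k \<le> x}"
  define j where "j = Max ?K"
  have K: "finite ?K" "1 \<in> ?K"
    using assms(1) one_le_d by auto
  then have "j \<in> ?K"
    unfolding j_def by (intro Max_in) auto
  moreover have "Suc j \<notin> ?K"
  proof
    assume "Suc j \<in> ?K"
    then have "Suc j \<le> j"
      unfolding j_def using K(1) by (intro Max_ge)
    then show False
      by simp
  qed
  moreover have "j \<noteq> d"
    using \<open>j \<in> ?K\<close> assms(2) by auto
  ultimately show thesis
    by (intro that) auto
qed

lemma proj_point_interior:
  assumes "1 \<le> j" "j < d" "\<theta> j \<le> x" "x < \<theta> (Suc j)"
  shows "proj_point d \<theta> \<Delta> x
    = map_pmf (\<lambda>b. if b then \<theta> (Suc j) else \<theta> j) (bernoulli_pmf ((x - \<theta> j) / \<Delta>))"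
proof (cases "x \<le> \<theta> 1")
  case True
  then have "j = 1" "x = \<theta> 1"
    using assms grid_point_le_iff[of j 1] by auto
  moreover have "bernoulli_pmf 0 = return_pmf False"
  proof (rule pmf_eqI)
    fix b
    show "pmf (bernoulli_pmf 0) b = pmf (return_pmf False) b"
      by (cases b) auto
  qed
  ultimately show ?thesis
    by (simp add: proj_point_def)
next
  case False
  have "\<theta> (Suc j) \<le> \<theta> d"
    using assms(1,2) grid_point_le_iff[of "Suc j" d] by auto
  then have not_above: "\<not> \<theta> d \<le> x"
    using assms(4) by linarith
  have "(GREATEST k. k \<in> {1..d} \<and> \<theta> k \<le> x) = j"
  proof (rule Greatest_equality)
    show "j \<in> {1..d} \<and> \<theta> j \<le> x"
      using assms by auto
  next
    fix k assume k: "k \<in> {1..d} \<and> \<theta> k \<le> x"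
    show "k \<le> j"
    proof (rule ccontr)
      assume "\<not> k \<le> j"
      then have "\<theta> (Suc j) \<le> \<theta> k"
        using k assms(1,2) grid_point_le_iff[of "Suc j" k] by auto
      then show False
        using k assms(4) by linarith
    qed
  qed
  then show ?thesis
    unfolding proj_point_def Suc_eq_plus1[symmetric] using False not_above by simp
qed

lemma proj_point_cases:
  obtains (below) "x \<le> \<theta> 1" "proj_point d \<theta> \<Delta> x = return_pmf (\<theta> 1)"
  | (above) "\<theta> 1 < x" "\<theta> d \<le> x" "proj_point d \<theta> \<Delta> x = return_pmf (\<theta> d)"
  | (cell) j where "1 \<le> j" "j < d" "\<theta> j \<le> x" "x < \<theta> (Suc j)"
      "proj_point d \<theta> \<Delta> x
        = map_pmf (\<lambda>b. if b then \<theta> (Suc j) else \<theta> j) (bernoulli_pmf ((x - \<theta> j) / \<Delta>))"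
proof -
  consider "x \<le> \<theta> 1" | "\<theta> 1 < x" "\<theta> d \<le> x" | "\<theta> 1 \<le> x" "x < \<theta> d"
    by linarith
  then show thesis
  proof cases
    case 3
    then obtain j where "1 \<le> j" "j < d" "\<theta> j \<le> x" "x < \<theta> (Suc j)"
      by (rule grid_cell_exists)
    then show thesis
      using cell proj_point_interior by blast
  qed (auto intro: below above simp: proj_point_def)
qed

lemma set_pmf_proj_point: "set_pmf (proj_point d \<theta> \<Delta> x) \<subseteq> \<theta> ` {1..d}"
  using one_le_d by (cases x rule: proj_point_cases) auto

lemma measure_proj_point_initial_segment:
  assumes "1 \<le> k" "k < d"
  shows "measure (proj_point d \<theta> \<Delta> x) (\<theta> ` {1..k}) = clamp01 (real k - (x - \<theta> 1) / \<Delta>)"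
proof (cases x rule: proj_point_cases)
  case below
  then have "(x - \<theta> 1) / \<Delta> \<le> 0"
    using stride_pos by (simp add: divide_nonpos_pos)
  then show ?thesis
    using below assms by (auto simp: clamp01_def)
next
  case above
  have "\<theta> d \<notin> \<theta> ` {1..k}"
    using assms grid_point_in_initial_segment_iff[of d k] by auto
  moreover have "real d - 1 \<le> (x - \<theta> 1) / \<Delta>"
    using above grid_point[of d] one_le_d stride_pos by (simp add: field_simps)
  ultimately show ?thesis
    using above assms by (auto simp: clamp01_def)
next
  case (cell j)
  define t where "t = (x - \<theta> j) / \<Delta>"
  have t: "0 \<le> t" "t < 1"
    using cell stride[of j] stride_pos by (auto simp: t_def field_simps)
  have "(x - \<theta> 1) / \<Delta> = real j - 1 + t"
    using cell grid_point[of j] stride_pos by (simp add: t_def field_simps)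
  moreover have "measure (proj_point d \<theta> \<Delta> x) (\<theta> ` {1..k})
      = (if \<theta> j \<in> \<theta> ` {1..k} then 1 - t else 0) + (if \<theta> (Suc j) \<in> \<theta> ` {1..k} then t else 0)"
    unfolding cell(5) t_def[symmetric] using t by (intro measure_map_bernoulli_pmf) auto
  moreover have "\<theta> j \<in> \<theta> ` {1..k} \<longleftrightarrow> j \<le> k" "\<theta> (Suc j) \<in> \<theta> ` {1..k} \<longleftrightarrow> Suc j \<le> k"
    using cell assms grid_point_in_initial_segment_iff by auto
  ultimately show ?thesis
    using t by (auto simp: clamp01_def)
qed

lemma G_op_eq_grid_weights:
  assumes "i \<in> {1..m}"
  shows "G_op m d \<theta> \<Delta> P R g p i
    = grid_weights (proj_C d \<theta> \<Delta> (T_op P R g (\<lambda>j. cat_law d \<theta> (p j) 0) i))"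
proof -
  define L where "L i = proj_C d \<theta> \<Delta> (T_op P R g (\<lambda>j. cat_law d \<theta> (p j) 0) i)" for i
  have L_grid: "set_pmf (L i) \<subseteq> \<theta> ` {1..d}" for i
    using set_pmf_proj_point by (auto simp: L_def proj_C_def)
  define q where "q = (\<lambda>i. if i \<in> {1..m} then grid_weights (L i) else (\<lambda>_. 0))"
  have "G_op m d \<theta> \<Delta> P R g p = q"
    unfolding G_op_def L_def[symmetric]
  proof (rule the_equality)
    show "q \<in> simplex_fam m d \<and> (\<forall>i. i \<notin> {1..m} \<longrightarrow> q i = (\<lambda>_. 0)) \<and>
        (\<forall>i\<in>{1..m}. L i = cat_law d \<theta> (q i) 0)"
      using grid_weights_in_simplex[OF L_grid] cat_law_grid_weights[OF L_grid]
      by (auto simp: q_def simplex_fam_def)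
  next
    fix q' assume q': "q' \<in> simplex_fam m d \<and> (\<forall>i. i \<notin> {1..m} \<longrightarrow> q' i = (\<lambda>_. 0)) \<and>
        (\<forall>i\<in>{1..m}. L i = cat_law d \<theta> (q' i) 0)"
    show "q' = q"
    proof
      fix i
      show "q' i = q i"
        using q' grid_weights_cat_law by (cases "i \<in> {1..m}") (auto simp: q_def simplex_fam_def)
    qed
  qed
  then show ?thesis
    using assms by (simp add: q_def L_def)
qed

lemma measure_proj_shifted_cat_law_initial_segment:
  assumes "u \<in> simplex_d d" and "1 \<le> k" "k < d"
  shows "measure (bind_pmf (cat_law d \<theta> u 0) (\<lambda>y. proj_point d \<theta> \<Delta> (s + y))) (\<theta> ` {1..k})
    = clamp01 (real k - real d + 1 - s / \<Delta>)
      + (\<Sum>l\<in>{1..d-1}. cdf_coord u l * transport_kernel (s / \<Delta>) k l)"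
proof -
  define f where "f = (\<lambda>l. clamp01 (real k - real l + 1 - s / \<Delta>))"
  have proj_cdf: "measure (proj_point d \<theta> \<Delta> (s + \<theta> l)) (\<theta> ` {1..k}) = f l" if "l \<in> {1..d}" for l
  proof -
    have "real k - (s + \<theta> l - \<theta> 1) / \<Delta> = real k - real l + 1 - s / \<Delta>"
      using grid_point[of l] that stride_pos by (simp add: field_simps)
    then show ?thesis
      unfolding f_def by (metis measure_proj_point_initial_segment[OF assms(2,3)])
  qed
  let ?\<eta> = "cat_law d \<theta> u 0" and ?A = "\<theta> ` {1..k}"
  have "measure (bind_pmf ?\<eta> (\<lambda>y. proj_point d \<theta> \<Delta> (s + y))) ?A
      = (\<Sum>x\<in>\<theta> ` {1..d}. pmf ?\<eta> x * measure (proj_point d \<theta> \<Delta> (s + x)) ?A)"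
    by (rule measure_bind_pmf_finite) (use set_pmf_cat_law[OF assms(1)] in auto)
  also have "\<dots> = (\<Sum>l\<in>{1..d}. pmf ?\<eta> (\<theta> l) * measure (proj_point d \<theta> \<Delta> (s + \<theta> l)) ?A)"
    by (rule sum.reindex[OF inj_on_grid, unfolded comp_def])
  also have "\<dots> = (\<Sum>l\<in>{1..d}. u l * f l)"
    using pmf_cat_law_grid_point[OF assms(1)] proj_cdf by (intro sum.cong refl) auto
  also have "\<dots> = cdf_coord u d * f d + (\<Sum>l\<in>{1..<d}. cdf_coord u l * (f l - f (Suc l)))"
    by (rule sum_by_parts_cdf_coord)
  also have "\<dots> = f d + (\<Sum>l\<in>{1..d-1}. cdf_coord u l * transport_kernel (s / \<Delta>) k l)"
  proof -
    have "cdf_coord u d = 1" "{1..<d} = {1..d-1}"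
      using assms(1) one_le_d by (auto simp: cdf_coord_def simplex_d_def)
    moreover have "f l - f (Suc l) = transport_kernel (s / \<Delta>) k l" for l
      by (simp add: f_def transport_kernel_def algebra_simps)
    ultimately show ?thesis
      by simp
  qed
  finally show ?thesis
    by (simp add: f_def)
qed

lemma cdf_coord_G_op:
  assumes "i \<in> {1..m}" and "1 \<le> k" "k < d"
    and finite_support: "finite (set_pmf (step_reward_pmf P R g i))"
    and p: "\<And>a. a \<in> set_pmf (step_reward_pmf P R g i) \<Longrightarrow> p (fst a) \<in> simplex_d d"
  shows "cdf_coord (G_op m d \<theta> \<Delta> P R g p i) k
    = (\<Sum>a\<in>set_pmf (step_reward_pmf P R g i). pmf (step_reward_pmf P R g i) a *
        (clamp01 (real k - real d + 1 - snd a / \<Delta>)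
          + (\<Sum>l\<in>{1..d-1}. cdf_coord (p (fst a)) l * transport_kernel (snd a / \<Delta>) k l)))"
proof -
  define J where "J = step_reward_pmf P R g i"
  define L where "L = proj_C d \<theta> \<Delta> (T_op P R g (\<lambda>j. cat_law d \<theta> (p j) 0) i)"
  have "cdf_coord (G_op m d \<theta> \<Delta> P R g p i) k = (\<Sum>k'\<in>{1..k}. pmf L (\<theta> k'))"
    unfolding cdf_coord_def G_op_eq_grid_weights[OF assms(1)] L_def[symmetric]
    using assms(3) by (intro sum.cong) (auto simp: grid_weights_def)
  also have "\<dots> = measure L (\<theta> ` {1..k})"
    using inj_on_subset[OF inj_on_grid, of "{1..k}"] assms(3)
    by (simp add: measure_measure_pmf_finite sum.reindex)
  also have "\<dots> = (\<Sum>a\<in>set_pmf J. pmf J a *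
      measure (bind_pmf (cat_law d \<theta> (p (fst a)) 0) (\<lambda>y. proj_point d \<theta> \<Delta> (snd a + y))) (\<theta> ` {1..k}))"
    unfolding L_def J_def proj_C_T_op_eq_bind_step_reward_pmf
    by (rule measure_bind_pmf_finite) (use finite_support in auto)
  also have "\<dots> = (\<Sum>a\<in>set_pmf J. pmf J a *
      (clamp01 (real k - real d + 1 - snd a / \<Delta>)
        + (\<Sum>l\<in>{1..d-1}. cdf_coord (p (fst a)) l * transport_kernel (snd a / \<Delta>) k l)))"
    using assms(2,3) p unfolding J_def
    by (intro sum.cong refl arg_cong2[where f = "(*)"] measure_proj_shifted_cat_law_initial_segment)
  finally show ?thesis
    by (simp add: J_def)
qed

lemma cramer_G_op_le:
  assumes i: "i \<in> {1..m}"
    and finite_support: "finite (set_pmf (step_reward_pmf P R g i))"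
    and states: "\<And>a. a \<in> set_pmf (step_reward_pmf P R g i) \<Longrightarrow> fst a \<in> {1..m}"
    and p: "p \<in> simplex_fam m d" and q: "q \<in> simplex_fam m d"
  shows "cramer d \<Delta> (G_op m d \<theta> \<Delta> P R g p i) (G_op m d \<theta> \<Delta> P R g q i) \<le> cramer_inf m d \<Delta> p q"
proof -
  define J where "J = step_reward_pmf P R g i"
  define M where "M = cramer_inf m d \<Delta> p q"
  define D :: "nat \<times> real \<Rightarrow> nat \<Rightarrow> real"
    where "D = (\<lambda>a l. cdf_coord (p (fst a)) l - cdf_coord (q (fst a)) l)"
  define V :: "nat \<Rightarrow> nat \<Rightarrow> nat \<times> real \<Rightarrow> real"
    where "V = (\<lambda>k l a. transport_kernel (snd a / \<Delta>) k l)"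
  have M_nonneg: "0 \<le> M"
    using cramer_nonneg[of \<Delta> d "p i" "q i"] cramer_le_cramer_inf[OF i, of d \<Delta> p q] stride_pos
    by (simp add: M_def)
  have D_bound: "(\<Sum>l\<in>{1..d-1}. (D a l)^2) \<le> M^2 / \<Delta>" if "a \<in> set_pmf J" for a
  proof -
    have "sqrt (\<Delta> * (\<Sum>l\<in>{1..d-1}. (D a l)^2)) \<le> M"
      using cramer_le_cramer_inf[OF states, of a d \<Delta> p q] that
      by (simp add: M_def D_def J_def cramer_def)
    then have "\<Delta> * (\<Sum>l\<in>{1..d-1}. (D a l)^2) \<le> M^2"
      by (rule sqrt_le_D)
    then show ?thesis
      using stride_pos by (simp add: field_simps)
  qed
  have p_states: "p (fst a) \<in> simplex_d d" and q_states: "q (fst a) \<in> simplex_d d"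
    if "a \<in> set_pmf (step_reward_pmf P R g i)" for a
    using states[OF that] p q by (auto simp: simplex_fam_def)
  have diff: "cdf_coord (G_op m d \<theta> \<Delta> P R g p i) k - cdf_coord (G_op m d \<theta> \<Delta> P R g q i) k
      = (\<Sum>a\<in>set_pmf J. pmf J a * (\<Sum>l\<in>{1..d-1}. V k l a * D a l))" if "k \<in> {1..d-1}" for k
  proof -
    have "1 \<le> k" "k < d"
      using that by auto
    then show ?thesis
      by (simp add: cdf_coord_G_op[OF i _ _ finite_support, where p = p, OF _ _ p_states]
          cdf_coord_G_op[OF i _ _ finite_support, where p = q, OF _ _ q_states] J_def V_def D_def
          sum_subtractf sum.distrib algebra_simps)
  qed
  have "(\<Sum>k\<in>{1..d-1}. (cdf_coord (G_op m d \<theta> \<Delta> P R g p i) k - cdf_coord (G_op m d \<theta> \<Delta> P R g q i) k)^2)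
      = (\<Sum>k\<in>{1..d-1}. (\<Sum>a\<in>set_pmf J. pmf J a * (\<Sum>l\<in>{1..d-1}. V k l a * D a l))^2)"
    by (intro sum.cong refl) (simp add: diff)
  also have "\<dots> \<le> M^2 / \<Delta>"
    using finite_support D_bound transport_kernel_row_sum_le transport_kernel_column_sum_le
    by (intro sum_squares_substochastic_mixture_le)
      (auto simp: J_def V_def sum_pmf_eq_1 transport_kernel_nonneg)
  finally show ?thesis
    using M_nonneg stride_pos unfolding cramer_def M_def[symmetric]
    by (intro real_le_lsqrt) (simp_all add: field_simps)
qed

lemma cramer_inf_G_op_le:
  assumes "1 \<le> m" and "stoch_kernel m P"
    and finite_rewards: "\<And>i j. i \<in> {1..m} \<Longrightarrow> j \<in> {1..m} \<Longrightarrow> finite (set_pmf (R i j))"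
    and "p \<in> simplex_fam m d" "q \<in> simplex_fam m d"
  shows "cramer_inf m d \<Delta> (G_op m d \<theta> \<Delta> P R g p) (G_op m d \<theta> \<Delta> P R g q) \<le> cramer_inf m d \<Delta> p q"
proof -
  have "cramer d \<Delta> (G_op m d \<theta> \<Delta> P R g p i) (G_op m d \<theta> \<Delta> P R g q i) \<le> cramer_inf m d \<Delta> p q"
    if i: "i \<in> {1..m}" for i
  proof (rule cramer_G_op_le[OF i _ _ assms(4,5)])
    have P_states: "set_pmf (P i) \<subseteq> {1..m}"
      using assms(2) i by (auto simp: stoch_kernel_def)
    then have "finite (set_pmf (P i))"
      by (rule finite_subset) simp
    then show "finite (set_pmf (step_reward_pmf P R g i))"
      using finite_rewards i P_states by (auto simp: set_pmf_step_reward_pmf)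
    show "fst a \<in> {1..m}" if "a \<in> set_pmf (step_reward_pmf P R g i)" for a
      using that P_states by (auto simp: set_pmf_step_reward_pmf)
  qed
  then show ?thesis
    using assms(1) by (auto simp: cramer_inf_def intro!: Max.boundedI)
qed

end

theorem theorem1:
  fixes m d :: nat and P :: "nat \<Rightarrow> nat pmf" and R :: "nat \<Rightarrow> nat \<Rightarrow> real pmf"
    and \<theta> :: "nat \<Rightarrow> real" and \<Delta> g :: real and p q :: "nat \<Rightarrow> nat \<Rightarrow> real"
  assumes "m \<ge> 1"
    and "stoch_kernel m P" and "irreducible_kernel m P" and "aperiodic_kernel m P"
    and "\<forall>i\<in>{1..m}. \<forall>j\<in>{1..m}. finite (set_pmf (R i j)) \<and> set_pmf (R i j) \<subseteq> {0..1}"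
    and "d \<ge> 1" and "\<Delta> > 0" and "\<forall>k. 1 \<le> k \<and> k < d \<longrightarrow> \<theta> (k+1) = \<theta> k + \<Delta>"
    and "p \<in> simplex_fam m d" and "q \<in> simplex_fam m d"
  shows "cramer_inf m d \<Delta> (G_op m d \<theta> \<Delta> P R g p) (G_op m d \<theta> \<Delta> P R g q)
           \<le> cramer_inf m d \<Delta> p q \<and>
         cramer_inf m d \<Delta> (G_op m d \<theta> \<Delta> P R (gain m P R) p) (G_op m d \<theta> \<Delta> P R (gain m P R) q)
           \<le> cramer_inf m d \<Delta> p q"
proof -
  interpret uniform_grid d \<theta> \<Delta>
    using assms(6-8) by unfold_locales auto
  have "cramer_inf m d \<Delta> (G_op m d \<theta> \<Delta> P R g' p) (G_op m d \<theta> \<Delta> P R g' q) \<le> cramer_inf m d \<Delta> p q"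
    for g'
    using assms(1,2,5,9,10) by (intro cramer_inf_G_op_le) auto
  then show ?thesis
    by blast
qed

end
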